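(* Let $\zeta_*\in(0,1]$, $\gamma_*\in(0,1]$, and $\nu_*=(1-\zeta_* )\delta_0+\zeta_*\delta_{\gamma_*}$. Consider the optimization problem of minimizing $\|F_\nu-F_{\nu_*}\|_\infty$ over probability distributions $\nu$ on $\mathbb{R}$ subject to $\nu((0,\infty))\le\frac12\zeta_*$. Then the optimal point of this problem is \[ \nu_{OPT}=(1-\tfrac12\zeta_* )\delta_0+\tfrac12\zeta_*\delta_{2\gamma_*}, \] i.e., $\nu_{OPT}$ is feasible and attains the minimum value.
   Context: $\delta_x$ denotes the point mass at $x$. For a probability distribution $\nu$ on $\mathbb{R}$, $F_\nu(t):=\mathbb{P}_{\mu\sim\nu,\,X\sim\mathcal{N}(\mu,1)}(X\le t)$, and $\|\cdot\|_\infty$ is the sup norm over $t\in\mathbb{R}$. *)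

theory Defs
  imports "HOL-Probability.Probability"
begin

definition Phi :: "real \<Rightarrow> real" where
  "Phi x = measure (density lborel std_normal_density) {..x}"

text \<open>CDF of the Gaussian location mixture: X ~ N(mu,1) with mu ~ nu.
  P(X \<le> t) = E_nu[Phi(t - mu)].\<close>
definition mixCDF :: "real measure \<Rightarrow> real \<Rightarrow> real" where
  "mixCDF \<nu> t = (\<integral>\<mu>. Phi (t - \<mu>) \<partial>\<nu>)"

definition cdf_dist :: "real measure \<Rightarrow> real measure \<Rightarrow> real" where
  "cdf_dist \<nu> \<nu>' = (SUP t. \<bar>mixCDF \<nu> t - mixCDF \<nu>' t\<bar>)"

definition prob_dist :: "real measure \<Rightarrow> bool" where
  "prob_dist \<nu> \<longleftrightarrow> prob_space \<nu> \<and> sets \<nu> = sets borel"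

definition two_point :: "real \<Rightarrow> real \<Rightarrow> real \<Rightarrow> real measure" where
  "two_point x y p = distr (measure_pmf (bernoulli_pmf p)) borel (\<lambda>b. if b then y else x)"

end

theory Submission
  imports Defs
begin

text \<open>
  Write \<open>F\<^sub>O\<close> and \<open>F\<^sub>*\<close> for the mixture CDFs of \<open>\<nu>\<^sub>O\<^sub>P\<^sub>T\<close> and \<open>\<nu>\<^sub>*\<close>. Their difference
  \<open>F\<^sub>O - F\<^sub>*\<close> is \<open>\<zeta>/2\<close> times the second difference \<open>\<Phi>(t) - 2\<Phi>(t-\<gamma>) + \<Phi>(t-2\<gamma>)\<close>, which is
  odd about \<open>t = \<gamma>\<close> and nonnegative for \<open>t \<le> \<gamma>\<close>. Fix \<open>t \<le> \<gamma>\<close>; the dual certificate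
  \<open>k(m) = \<phi>(t) \<Phi>(t-m) - \<phi>(t-2\<gamma>) \<Phi>(2\<gamma>-t-m)\<close> integrates against any \<open>\<mu>\<close> to
  \<open>\<phi>(t) F\<^sub>\<mu>(t) - \<phi>(t-2\<gamma>) F\<^sub>\<mu>(2\<gamma>-t)\<close>. Since \<open>k\<close> is nonincreasing on \<open>(-\<infinity>, 2\<gamma>]\<close> and
  minimal at \<open>2\<gamma>\<close>, the feasible \<open>\<nu>\<close> with the smallest integral of \<open>k\<close> is \<open>\<nu>\<^sub>O\<^sub>P\<^sub>T\<close>.
  Subtracting the integral against \<open>\<nu>\<^sub>*\<close> and using the oddness gives
  \<open>(\<phi>(t) + \<phi>(t-2\<gamma>)) (F\<^sub>O - F\<^sub>*)(t) \<le> (\<phi>(t) + \<phi>(t-2\<gamma>)) \<parallel>F\<^sub>\<nu> - F\<^sub>*\<parallel>\<^sub>\<infinity>\<close>.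
\<close>

lemma real_distribution_std_normal: "real_distribution std_normal_distribution"
  by (auto simp: real_distribution_def real_distribution_axioms_def intro: prob_space_normal_density)

lemma Phi_eq_cdf: "Phi = cdf std_normal_distribution"
  by (rule ext) (simp add: Phi_def cdf_def)

lemma Phi_nonneg: "0 \<le> Phi x"
  and Phi_le_1: "Phi x \<le> 1"
  using real_distribution_std_normal
  by (simp_all add: Phi_eq_cdf real_distribution.cdf_bounded_prob
      finite_borel_measure.cdf_nonneg real_distribution.finite_borel_measure_M)

lemma Phi_mono: "x \<le> y \<Longrightarrow> Phi x \<le> Phi y"
  using real_distribution_std_normal
  by (simp add: Phi_eq_cdf finite_borel_measure.cdf_nondecreasing
      real_distribution.finite_borel_measure_M)

lemma borel_measurable_Phi[measurable]: "Phi \<in> borel_measurable borel"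
  by (rule borel_measurable_mono) (simp add: mono_def Phi_mono)

lemma continuous_on_std_normal_density: "continuous_on S std_normal_density"
  unfolding std_normal_density_def by (intro continuous_intros) auto

lemma Phi_diff_eq_integral:
  assumes "x < y"
  shows "Phi y - Phi x = integral {x..y} std_normal_density"
proof -
  have integrable: "std_normal_density integrable_on {x..y}"
    by (rule integrable_continuous_real[OF continuous_on_std_normal_density])
  have "(std_normal_density has_integral integral {x..y} std_normal_density) {x<..y}"
  proof (subst has_integral_spike_set_eq)
    show "negligible {z \<in> {x<..y} - {x..y}. std_normal_density z \<noteq> 0}"
      by (rule negligible_subset[of "{}"]) auto
    show "negligible {z \<in> {x..y} - {x<..y}. std_normal_density z \<noteq> 0}"
      by (rule negligible_subset[of "{x}"]) auto
  qed (use integrable in \<open>simp add: has_integral_integral\<close>)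
  then have "emeasure std_normal_distribution {x<..y}
      = ennreal (integral {x..y} std_normal_density)"
    by (simp add: emeasure_density nn_integral_has_integral_lebesgue')
  moreover have "0 \<le> integral {x..y} std_normal_density"
    by (rule integral_nonneg[OF integrable]) simp
  ultimately show ?thesis
    using finite_borel_measure.cdf_diff_eq[OF real_distribution.finite_borel_measure_M
        [OF real_distribution_std_normal] assms]
    by (simp add: Phi_eq_cdf measure_def)
qed

lemma Phi_has_real_derivative: "(Phi has_real_derivative std_normal_density x) (at x)"
proof -
  let ?F = "\<lambda>z. Phi (x - 1) + integral {x - 1..z} std_normal_density"
  have "(?F has_real_derivative std_normal_density x) (at x within {x - 1..x + 1})"
    using integral_has_real_derivative[OF continuous_on_std_normal_density, of x "x - 1" "x + 1"]
    by (auto intro!: derivative_eq_intros)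
  then have "(?F has_real_derivative std_normal_density x) (at x)"
    by (simp add: at_within_Icc_at)
  then show ?thesis
  proof (rule has_field_derivative_transform_within_open[where S = "{x - 1<..<x + 1}"])
    show "?F z = Phi z" if "z \<in> {x - 1<..<x + 1}" for z
      using that Phi_diff_eq_integral[of "x - 1" z] by simp
  qed auto
qed

declare Phi_has_real_derivative[THEN DERIV_chain2, derivative_intros]

lemma Phi_minus: "Phi (- x) = 1 - Phi x"
proof -
  define g where "g x = Phi x + Phi (- x)" for x
  have "(g has_real_derivative 0) (at z)" for z
    unfolding g_def by (auto intro!: derivative_eq_intros simp: std_normal_density_def)
  then have const: "g z = g 0" for z
    using DERIV_isconst_all by blast
  have "(g \<longlongrightarrow> 1 + 0) at_top"
    unfolding g_def
  proof (intro tendsto_add)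
    show "(Phi \<longlongrightarrow> 1) at_top"
      using real_distribution.cdf_lim_at_top_prob[OF real_distribution_std_normal]
      by (simp add: Phi_eq_cdf)
    show "((\<lambda>x. Phi (- x)) \<longlongrightarrow> 0) at_top"
      using finite_borel_measure.cdf_lim_at_bot[OF real_distribution.finite_borel_measure_M
          [OF real_distribution_std_normal]] filterlim_uminus_at_bot_at_top
      unfolding Phi_eq_cdf by (rule filterlim_compose)
  qed
  moreover have "g = (\<lambda>_. g 0)"
    using const by auto
  ultimately have "g 0 = 1"
    by (metis add.right_neutral tendsto_const_iff trivial_limit_at_top_linorder)
  then show ?thesis
    using const[of x] by (simp add: g_def)
qed

lemma std_normal_density_antimono: "x\<^sup>2 \<le> y\<^sup>2 \<Longrightarrow> std_normal_density y \<le> std_normal_density x"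
  unfolding std_normal_density_def by (intro mult_left_mono) auto

lemma std_normal_density_mult_antimono:
  assumes "c\<^sup>2 + d\<^sup>2 \<le> a\<^sup>2 + b\<^sup>2"
  shows "std_normal_density a * std_normal_density b \<le> std_normal_density c * std_normal_density d"
proof -
  have product: "std_normal_density x * std_normal_density y
      = (1 / sqrt (2 * pi))\<^sup>2 * exp (- (x\<^sup>2 + y\<^sup>2) / 2)" for x y
    by (simp add: std_normal_density_def power2_eq_square exp_add[symmetric] field_simps)
  show ?thesis
    unfolding product using assms by (intro mult_left_mono) auto
qed

lemma DERIV_peak:
  fixes f f' :: "real \<Rightarrow> real"
  assumes deriv: "\<And>x. (f has_real_derivative f' x) (at x)"
    and up: "\<And>x. x \<le> c \<Longrightarrow> 0 \<le> f' x"
    and down: "\<And>x. c \<le> x \<Longrightarrow> f' x \<le> 0"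
  shows "x \<le> y \<Longrightarrow> y \<le> c \<Longrightarrow> f x \<le> f y"
    and "f x \<le> f c"
proof -
  show mono: "f x \<le> f y" if "x \<le> y" "y \<le> c" for x y
  proof (rule DERIV_nonneg_imp_nondecreasing[where f = f, OF \<open>x \<le> y\<close>])
    fix z assume "z \<le> y"
    with \<open>y \<le> c\<close> have "z \<le> c" by linarith
    then show "\<exists>d. (f has_real_derivative d) (at z) \<and> 0 \<le> d"
      using deriv up by blast
  qed
  show "f x \<le> f c"
  proof (cases "x \<le> c")
    case True
    then show ?thesis by (rule mono) simp
  next
    case False
    show ?thesis
    proof (rule DERIV_nonpos_imp_nonincreasing[where f = f])
      show "c \<le> x" using False by simp
      show "\<exists>d. (f has_real_derivative d) (at z) \<and> d \<le> 0" if "c \<le> z" for z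
        using deriv down that by blast
    qed
  qed
qed

lemma Phi_interval_le_centered:
  assumes "a \<le> b"
  shows "Phi (b - m) - Phi (a - m) \<le> Phi ((b - a) / 2) - Phi ((a - b) / 2)"
proof -
  let ?f = "\<lambda>m. Phi (b - m) - Phi (a - m)"
  have sq_diff: "(b - m)\<^sup>2 - (a - m)\<^sup>2 = (b - a) * (a + b - 2 * m)" for m
    by (simp add: power2_eq_square algebra_simps)
  have "?f m \<le> ?f ((a + b) / 2)"
  proof (rule DERIV_peak(2)[where f = ?f
        and f' = "\<lambda>m. std_normal_density (a - m) - std_normal_density (b - m)"])
    show "(?f has_real_derivative std_normal_density (a - m) - std_normal_density (b - m)) (at m)"
      for m
      by (auto intro!: derivative_eq_intros)
    show "0 \<le> std_normal_density (a - m) - std_normal_density (b - m)"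
      if "m \<le> (a + b) / 2" for m
    proof -
      have "0 \<le> (b - a) * (a + b - 2 * m)"
        using assms that by (intro mult_nonneg_nonneg) auto
      with sq_diff[of m] show ?thesis
        using std_normal_density_antimono[of "a - m" "b - m"] by linarith
    qed
    show "std_normal_density (a - m) - std_normal_density (b - m) \<le> 0"
      if "(a + b) / 2 \<le> m" for m
    proof -
      have "(b - a) * (a + b - 2 * m) \<le> 0"
        using assms that by (intro mult_nonneg_nonpos) auto
      with sq_diff[of m] show ?thesis
        using std_normal_density_antimono[of "b - m" "a - m"] by linarith
    qed
  qed
  then show ?thesis
    by (simp add: field_simps)
qed

definition Phi_second_diff :: "real \<Rightarrow> real \<Rightarrow> real" where
  "Phi_second_diff h t = Phi t - 2 * Phi (t - h) + Phi (t - 2 * h)"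

lemma Phi_second_diff_reflect: "Phi_second_diff h (2 * h - t) = - Phi_second_diff h t"
  using Phi_minus[of t] Phi_minus[of "t - h"] Phi_minus[of "t - 2 * h"]
  by (simp add: Phi_second_diff_def)

lemma Phi_second_diff_nonneg:
  assumes "t \<le> h"
  shows "0 \<le> Phi_second_diff h t"
proof -
  have "Phi (2 * h - t) - Phi t \<le> Phi (h - t) - Phi (t - h)"
    using Phi_interval_le_centered[of t "2 * h - t" 0] assms
    by (simp add: diff_divide_distrib)
  then show ?thesis
    using Phi_minus[of "t - h"] Phi_minus[of "t - 2 * h"]
    by (simp add: Phi_second_diff_def)
qed

lemma prob_dist_two_point: "prob_dist (two_point x y p)"
  unfolding prob_dist_def two_point_def
  by (auto intro!: prob_space.prob_space_distr prob_space_measure_pmf)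

lemma integral_two_point:
  assumes "0 \<le> p" "p \<le> 1" "f \<in> borel_measurable borel"
  shows "(\<integral>m. f m \<partial>two_point x y p) = (1 - p) * f x + p * f y"
  unfolding two_point_def using assms
  by (subst integral_distr) (auto simp: integral_measure_pmf[where A = UNIV] UNIV_bool)

lemma mixCDF_two_point:
  "0 \<le> p \<Longrightarrow> p \<le> 1 \<Longrightarrow> mixCDF (two_point x y p) t = (1 - p) * Phi (t - x) + p * Phi (t - y)"
  unfolding mixCDF_def by (subst integral_two_point) auto

lemma measure_two_point_Ioi:
  assumes "0 < y" "0 \<le> p" "p \<le> 1"
  shows "measure (two_point 0 y p) {0<..} = p"
proof -
  have "(\<lambda>b. if b then y else 0) -` {0<..} = {True}"
    using assms by (auto split: if_splits)
  then show ?thesis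
    unfolding two_point_def using assms
    by (subst measure_distr) (auto simp: measure_pmf_single)
qed

lemma mixCDF_optimal_minus_target:
  assumes "0 \<le> \<zeta>" "\<zeta> \<le> 1"
  shows "mixCDF (two_point 0 (2 * \<gamma>) (\<zeta> / 2)) t - mixCDF (two_point 0 \<gamma> \<zeta>) t
    = \<zeta> / 2 * Phi_second_diff \<gamma> t"
  using assms by (simp add: mixCDF_two_point Phi_second_diff_def algebra_simps)

lemma borel_measurable_prob_dist:
  "prob_dist \<nu> \<Longrightarrow> f \<in> borel_measurable borel \<Longrightarrow> f \<in> borel_measurable \<nu>"
  unfolding prob_dist_def using measurable_cong_sets by blast

lemma integrable_Phi_shift:
  assumes "prob_dist \<nu>"
  shows "integrable \<nu> (\<lambda>m. Phi (t - m))"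
proof -
  interpret prob_space \<nu>
    using assms by (simp add: prob_dist_def)
  show ?thesis
  proof (rule integrable_const_bound[where B = 1])
    show "AE m in \<nu>. norm (Phi (t - m)) \<le> 1"
      by (simp add: Phi_nonneg Phi_le_1)
  qed (rule borel_measurable_prob_dist[OF assms], measurable)
qed

lemma mixCDF_nonneg: "prob_dist \<nu> \<Longrightarrow> 0 \<le> mixCDF \<nu> t"
  unfolding mixCDF_def by (rule integral_nonneg_AE) (simp add: Phi_nonneg)

lemma mixCDF_le_1:
  assumes "prob_dist \<nu>"
  shows "mixCDF \<nu> t \<le> 1"
proof -
  interpret prob_space \<nu>
    using assms by (simp add: prob_dist_def)
  have "mixCDF \<nu> t \<le> (\<integral>m. 1 \<partial>\<nu>)"
    unfolding mixCDF_def by (rule integral_mono[OF integrable_Phi_shift[OF assms]]) (auto simp: Phi_le_1)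
  then show ?thesis
    by (simp add: prob_space)
qed

lemma abs_mixCDF_diff_le_cdf_dist:
  assumes "prob_dist \<nu>" "prob_dist \<mu>"
  shows "\<bar>mixCDF \<nu> t - mixCDF \<mu> t\<bar> \<le> cdf_dist \<nu> \<mu>"
  unfolding cdf_dist_def
proof (rule cSUP_upper)
  show "bdd_above (range (\<lambda>t. \<bar>mixCDF \<nu> t - mixCDF \<mu> t\<bar>))"
    using assms by (intro bdd_aboveI2[where M = 1])
      (smt (verit) mixCDF_nonneg mixCDF_le_1)
qed simp

text \<open>The certificate \<open>k\<close> of the proof sketch is \<open>dual_cert (2 * \<gamma>) t\<close>.\<close>
definition dual_cert :: "real \<Rightarrow> real \<Rightarrow> real \<Rightarrow> real" where
  "dual_cert r t m = std_normal_density t * Phi (t - m) - std_normal_density (t - r) * Phi (r - t - m)"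

lemma borel_measurable_dual_cert[measurable]: "dual_cert r t \<in> borel_measurable borel"
  unfolding dual_cert_def[abs_def] by measurable

lemma integral_dual_cert:
  assumes "prob_dist \<nu>"
  shows "(\<integral>m. dual_cert r t m \<partial>\<nu>)
    = std_normal_density t * mixCDF \<nu> t - std_normal_density (t - r) * mixCDF \<nu> (r - t)"
  unfolding dual_cert_def mixCDF_def
  using integrable_Phi_shift[OF assms] by simp

lemma dual_cert_shape:
  assumes "2 * t \<le> r"
  shows dual_cert_antimono: "m \<le> m' \<Longrightarrow> m' \<le> r \<Longrightarrow> dual_cert r t m' \<le> dual_cert r t m"
    and dual_cert_min: "dual_cert r t r \<le> dual_cert r t m"
proof -
  let ?f = "\<lambda>m. - dual_cert r t m"
  let ?f' = "\<lambda>m. std_normal_density t * std_normal_density (t - m)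
    - std_normal_density (t - r) * std_normal_density (r - t - m)"
  have deriv: "(?f has_real_derivative ?f' m) (at m)" for m
    unfolding dual_cert_def by (auto intro!: derivative_eq_intros)
  have sq_diff: "(t - r)\<^sup>2 + (r - t - m)\<^sup>2 - (t\<^sup>2 + (t - m)\<^sup>2) = 2 * (r - 2 * t) * (r - m)" for m
    by (simp add: power2_eq_square algebra_simps)
  have up: "0 \<le> ?f' m" if "m \<le> r" for m
  proof -
    have "0 \<le> 2 * (r - 2 * t) * (r - m)"
      using assms that by simp
    with sq_diff[of m] show ?thesis
      using std_normal_density_mult_antimono[of t "t - m" "t - r" "r - t - m"] by linarith
  qed
  have down: "?f' m \<le> 0" if "r \<le> m" for m
  proof -
    have "2 * (r - 2 * t) * (r - m) \<le> 0"
      using assms that by (simp add: mult_nonneg_nonpos)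
    with sq_diff[of m] show ?thesis
      using std_normal_density_mult_antimono[of "t - r" "r - t - m" t "t - m"] by linarith
  qed
  show "m \<le> m' \<Longrightarrow> m' \<le> r \<Longrightarrow> dual_cert r t m' \<le> dual_cert r t m"
    using DERIV_peak(1)[where f = ?f, OF deriv up down] by simp
  show "dual_cert r t r \<le> dual_cert r t m"
    using DERIV_peak(2)[where f = ?f, OF deriv up down] by simp
qed

lemma integral_two_point_le:
  fixes k :: "real \<Rightarrow> real"
  assumes \<nu>: "prob_dist \<nu>" "measure \<nu> {0<..} \<le> p" and p: "0 \<le> p" "p \<le> 1"
    and k: "k \<in> borel_measurable borel" "integrable \<nu> k"
    and antimono: "\<And>m. m \<le> 0 \<Longrightarrow> k 0 \<le> k m"
    and min: "\<And>m. k z \<le> k m"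
  shows "(\<integral>m. k m \<partial>two_point 0 z p) \<le> (\<integral>m. k m \<partial>\<nu>)"
proof -
  interpret prob_space \<nu>
    using \<nu>(1) by (simp add: prob_dist_def)
  define c where "c = k 0 - k z"
  have "0 \<le> c"
    using min[of 0] by (simp add: c_def)
  have Ioi: "{0<..} \<in> sets \<nu>"
    using \<nu>(1) by (simp add: prob_dist_def)
  have integrable_below: "integrable \<nu> (\<lambda>m. k 0 - c * indicator {0<..} m)"
    using Ioi by (auto simp: less_top[symmetric])
  have below: "k 0 - c * indicator {0<..} m \<le> k m" for m
    by (cases "m \<le> 0") (auto simp: c_def antimono min)
  have "(\<integral>m. k m \<partial>two_point 0 z p) = k 0 - c * p"
    using p k(1) by (simp add: integral_two_point c_def algebra_simps)
  also have "\<dots> \<le> k 0 - c * measure \<nu> {0<..}"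
    using mult_left_mono[OF \<nu>(2) \<open>0 \<le> c\<close>] by simp
  also have "\<dots> = (\<integral>m. k 0 - c * indicator {0<..} m \<partial>\<nu>)"
    using Ioi by (subst Bochner_Integration.integral_diff) (auto simp: prob_space less_top[symmetric])
  also have "\<dots> \<le> (\<integral>m. k m \<partial>\<nu>)"
    using integrable_below k(2) below by (rule integral_mono)
  finally show ?thesis .
qed

lemma integral_dual_cert_optimal_le:
  assumes \<nu>: "prob_dist \<nu>" "measure \<nu> {0<..} \<le> \<zeta> / 2"
    and \<zeta>: "0 \<le> \<zeta>" "\<zeta> \<le> 1" and \<gamma>: "0 \<le> \<gamma>" and "t \<le> \<gamma>"
  shows "(\<integral>m. dual_cert (2 * \<gamma>) t m \<partial>two_point 0 (2 * \<gamma>) (\<zeta> / 2))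
    \<le> (\<integral>m. dual_cert (2 * \<gamma>) t m \<partial>\<nu>)"
proof (rule integral_two_point_le[OF \<nu>])
  show "integrable \<nu> (dual_cert (2 * \<gamma>) t)"
    using integrable_Phi_shift[OF \<nu>(1)] by (simp add: dual_cert_def[abs_def])
  show "dual_cert (2 * \<gamma>) t 0 \<le> dual_cert (2 * \<gamma>) t m" if "m \<le> 0" for m
    using dual_cert_antimono[of t "2 * \<gamma>" m 0] that \<gamma> \<open>t \<le> \<gamma>\<close> by linarith
  show "dual_cert (2 * \<gamma>) t (2 * \<gamma>) \<le> dual_cert (2 * \<gamma>) t m" for m
    using dual_cert_min \<open>t \<le> \<gamma>\<close> by simp
qed (use \<zeta> in auto)

lemma mixCDF_optimal_minus_target_le_cdf_dist:
  assumes \<nu>: "prob_dist \<nu>" "measure \<nu> {0<..} \<le> \<zeta> / 2"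
    and \<zeta>: "0 \<le> \<zeta>" "\<zeta> \<le> 1" and "0 \<le> \<gamma>" "t \<le> \<gamma>"
  shows "mixCDF (two_point 0 (2 * \<gamma>) (\<zeta> / 2)) t - mixCDF (two_point 0 \<gamma> \<zeta>) t
    \<le> cdf_dist \<nu> (two_point 0 \<gamma> \<zeta>)"
proof -
  let ?O = "two_point 0 (2 * \<gamma>) (\<zeta> / 2)" and ?S = "two_point 0 \<gamma> \<zeta>"
  let ?t' = "2 * \<gamma> - t"
  define a where "a = std_normal_density t"
  define b where "b = std_normal_density (t - 2 * \<gamma>)"
  define D where "D s = mixCDF ?O s - mixCDF ?S s" for s
  define S where "S = cdf_dist \<nu> ?S"
  define E where "E \<mu> = (\<integral>m. dual_cert (2 * \<gamma>) t m \<partial>\<mu>)" for \<mu>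
  have E_eq: "E \<mu> = a * mixCDF \<mu> t - b * mixCDF \<mu> ?t'" if "prob_dist \<mu>" for \<mu>
    using integral_dual_cert[OF that] by (simp add: E_def a_def b_def)
  have "E ?O \<le> E \<nu>"
    unfolding E_def using integral_dual_cert_optimal_le[OF assms] .
  have D_reflect: "D ?t' = - D t"
    using Phi_second_diff_reflect[of \<gamma> t] \<zeta> by (simp add: D_def mixCDF_optimal_minus_target)
  have a_b: "0 < a" "0 < b"
    by (simp_all add: a_def b_def normal_density_pos)
  have "(a + b) * D t = a * D t - b * D ?t'"
    using D_reflect by (simp add: algebra_simps)
  also have "\<dots> = E ?O - E ?S"
    by (simp add: E_eq prob_dist_two_point D_def algebra_simps)
  also have "\<dots> \<le> E \<nu> - E ?S"
    using \<open>E ?O \<le> E \<nu>\<close> by simp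
  also have "\<dots> = a * (mixCDF \<nu> t - mixCDF ?S t) - b * (mixCDF \<nu> ?t' - mixCDF ?S ?t')"
    using \<nu>(1) by (simp add: E_eq prob_dist_two_point algebra_simps)
  also have "\<dots> \<le> a * S + b * S"
  proof -
    have "mixCDF \<nu> t - mixCDF ?S t \<le> S" "mixCDF ?S ?t' - mixCDF \<nu> ?t' \<le> S"
      using abs_mixCDF_diff_le_cdf_dist[OF \<nu>(1) prob_dist_two_point, of t 0 \<gamma> \<zeta>]
        abs_mixCDF_diff_le_cdf_dist[OF \<nu>(1) prob_dist_two_point, of ?t' 0 \<gamma> \<zeta>]
      unfolding S_def by linarith+
    then have "a * (mixCDF \<nu> t - mixCDF ?S t) \<le> a * S"
      "b * (mixCDF ?S ?t' - mixCDF \<nu> ?t') \<le> b * S"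
      using a_b by (simp_all add: mult_left_mono)
    then show ?thesis
      by (simp add: algebra_simps)
  qed
  finally show ?thesis
    using a_b by (simp add: D_def S_def distrib_right[symmetric])
qed

lemma cdf_dist_optimal_le:
  assumes \<nu>: "prob_dist \<nu>" "measure \<nu> {0<..} \<le> \<zeta> / 2"
    and \<zeta>: "0 \<le> \<zeta>" "\<zeta> \<le> 1" and \<gamma>: "0 \<le> \<gamma>"
  shows "cdf_dist (two_point 0 (2 * \<gamma>) (\<zeta> / 2)) (two_point 0 \<gamma> \<zeta>)
    \<le> cdf_dist \<nu> (two_point 0 \<gamma> \<zeta>)"
  unfolding cdf_dist_def[of "two_point 0 (2 * \<gamma>) (\<zeta> / 2)"]
proof (rule cSUP_least)
  fix t
  let ?D = "\<lambda>s. mixCDF (two_point 0 (2 * \<gamma>) (\<zeta> / 2)) s - mixCDF (two_point 0 \<gamma> \<zeta>) s"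
  have D_eq: "?D s = \<zeta> / 2 * Phi_second_diff \<gamma> s" for s
    using \<zeta> by (rule mixCDF_optimal_minus_target)
  show "\<bar>?D t\<bar> \<le> cdf_dist \<nu> (two_point 0 \<gamma> \<zeta>)"
  proof (cases "t \<le> \<gamma>")
    case True
    then show ?thesis
      using mixCDF_optimal_minus_target_le_cdf_dist[OF \<nu> \<zeta> \<gamma> True] Phi_second_diff_nonneg[OF True] \<zeta>
      by (simp add: D_eq)
  next
    case False
    then have "\<bar>?D t\<bar> = ?D (2 * \<gamma> - t)"
      using Phi_second_diff_nonneg[of "2 * \<gamma> - t" \<gamma>] Phi_second_diff_reflect[of \<gamma> t] \<zeta>
      by (simp add: D_eq abs_mult abs_of_nonpos)
    then show ?thesis
      using mixCDF_optimal_minus_target_le_cdf_dist[OF \<nu> \<zeta> \<gamma>, of "2 * \<gamma> - t"] False by simp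
  qed
qed simp

theorem lemma9:
  fixes \<zeta> \<gamma> :: real
  assumes "0 < \<zeta>" "\<zeta> \<le> 1" "0 < \<gamma>" "\<gamma> \<le> 1"
  shows "prob_dist (two_point 0 (2 * \<gamma>) (\<zeta> / 2))
    \<and> measure (two_point 0 (2 * \<gamma>) (\<zeta> / 2)) {0<..} \<le> \<zeta> / 2
    \<and> (\<forall>\<nu>. prob_dist \<nu> \<and> measure \<nu> {0<..} \<le> \<zeta> / 2 \<longrightarrow>
          cdf_dist (two_point 0 (2 * \<gamma>) (\<zeta> / 2)) (two_point 0 \<gamma> \<zeta>)
            \<le> cdf_dist \<nu> (two_point 0 \<gamma> \<zeta>))"
  using assms prob_dist_two_point measure_two_point_Ioi[of "2 * \<gamma>" "\<zeta> / 2"]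
    cdf_dist_optimal_le[of _ \<zeta> \<gamma>]
  by simp

end
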